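(* Let $q$ be a prime power and let $1 \le k \le m$ be integers. Then $\Lambda_q(k,m) = \mathcal{A}^G_q(k,m)$; that is, an $\mathbb{F}_{q^m}$-linear subspace $V \subseteq \mathbb{F}_{q^m}^k$ is Frobenius-closed if and only if $\dim_{\mathbb{F}_{q^m}}(V) = \mathrm{maxrk}(V)$.
   Context: For $v=(v_1,\dots,v_k)\in\mathbb{F}_{q^m}^k$, $\mathrm{rk}(v):=\dim_{\mathbb{F}_q}\mathrm{Span}_{\mathbb{F}_q}\{v_1,\dots,v_k\}$. For an $\mathbb{F}_{q^m}$-subspace $C\subseteq \mathbb{F}_{q^m}^k$ (a Gabidulin code), $\mathrm{maxrk}(C):=\max\{\mathrm{rk}(c): c\in C\}$; one always has $\dim_{\mathbb{F}_{q^m}}(C)\le \mathrm{maxrk}(C)$. $\mathcal{A}^G_q(k,m)$ denotes the set of $\mathbb{F}_{q^m}$-subspaces $C\subseteq\mathbb{F}_{q^m}^k$ with $\dim_{\mathbb{F}_{q^m}}(C)=\mathrm{maxrk}(C)$ (optimal Gabidulin anticodes). For $v\in\mathbb{F}_{q^m}^k$ let $v^q:=(v_1^q,\dots,v_k^q)$; a subspace $V\subseteq \mathbb{F}_{q^m}^k$ is Frobenius-closed if $v^q\in V$ for all $v\in V$. $\Lambda_q(k,m)$ denotes the set of Frobenius-closed $\mathbb{F}_{q^m}$-subspaces of $\mathbb{F}_{q^m}^k$ (including the zero space). *)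

theory Defs
  imports "HOL-Analysis.Analysis"
begin

text \<open>Ambient field F_{q^m} is a finite field type 'a with CARD('a) = q^m.
  Vectors in F_{q^m}^k are elements of 'a^'n with CARD('n) = k.\<close>

definition prime_power :: "nat \<Rightarrow> bool" where
  "prime_power q \<longleftrightarrow> (\<exists>p e. prime p \<and> e > 0 \<and> q = p ^ e)"

definition Fq :: "nat \<Rightarrow> 'a::field set" where
  "Fq q = {x. x ^ q = x}"

definition Fq_span :: "nat \<Rightarrow> 'a::field set \<Rightarrow> 'a set" where
  "Fq_span q S = {(\<Sum>b\<in>T. c b * b) | T c. finite T \<and> T \<subseteq> S \<and> (\<forall>b\<in>T. c b \<in> Fq q)}"

definition Fq_indep :: "nat \<Rightarrow> 'a::field set \<Rightarrow> bool" where
  "Fq_indep q B \<longleftrightarrow> (\<forall>T c. finite T \<longrightarrow> T \<subseteq> B \<longrightarrow> (\<forall>b\<in>T. c b \<in> Fq q) \<longrightarrow>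
      (\<Sum>b\<in>T. c b * b) = 0 \<longrightarrow> (\<forall>b\<in>T. c b = 0))"

definition Fq_dim :: "nat \<Rightarrow> 'a::field set \<Rightarrow> nat" where
  "Fq_dim q W = Max {card B | B. finite B \<and> B \<subseteq> W \<and> Fq_indep q B}"

definition rk :: "nat \<Rightarrow> 'a::field ^ 'n \<Rightarrow> nat" where
  "rk q v = Fq_dim q (Fq_span q (range (\<lambda>i. v $ i)))"

definition maxrk :: "nat \<Rightarrow> ('a::field ^ 'n) set \<Rightarrow> nat" where
  "maxrk q C = Max (rk q ` C)"

definition frob :: "nat \<Rightarrow> 'a::field ^ 'n \<Rightarrow> 'a ^ 'n" where
  "frob q v = (\<chi> i. (v $ i) ^ q)"

definition frob_closed :: "nat \<Rightarrow> ('a::field ^ 'n) set \<Rightarrow> bool" where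
  "frob_closed q V \<longleftrightarrow> (\<forall>v\<in>V. frob q v \<in> V)"

end

theory Submission
  imports Defs "HOL-Number_Theory.Residues" "HOL-Computational_Algebra.Polynomial"
begin

text \<open>
  Bring a subspace V of dimension d into reduced row echelon form: a basis b_i indexed by a set P of
  d pivot columns with b_i = e_i on the pivots.  Since |F_q|^d \<le> q^m, a family x_i (i \<in> P) that is
  F_q-independent exists, and the vector \<Sum> x_i b_i has rank \<ge> d; hence maxrk V \<ge> dim V always.
  If V is Frobenius-closed, b_i^q - b_i \<in> V vanishes on the pivots, so all entries of the b_i lie in
  F_q and every vector of V has its entries in the F_q-span of its d pivot entries: maxrk V = d.
  Conversely, if some entry c = b_i(j) lies outside F_q, a counting argument (using d < k \<le> m)
  produces x such that the entry (\<Sum> x_i b_i)(j) = c x_i + ... is F_q-independent of the x_i,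
  giving a vector of rank d + 1.  So maxrk V = d forces the b_i to be F_q-rational, and then V is
  Frobenius-closed because the Frobenius is additive.
\<close>

section \<open>Spans over a finite subfield\<close>

locale finite_subfield =
  fixes F :: "'a::field set"
  assumes finite_F: "finite F" and zero_mem: "0 \<in> F" and one_mem: "1 \<in> F"
    and add_mem: "\<And>x y. x \<in> F \<Longrightarrow> y \<in> F \<Longrightarrow> x + y \<in> F"
    and mult_mem: "\<And>x y. x \<in> F \<Longrightarrow> y \<in> F \<Longrightarrow> x * y \<in> F"
    and uminus_mem: "\<And>x. x \<in> F \<Longrightarrow> - x \<in> F"
    and inverse_mem: "\<And>x. x \<in> F \<Longrightarrow> inverse x \<in> F"
begin

lemma diff_mem: "x \<in> F \<Longrightarrow> y \<in> F \<Longrightarrow> x - y \<in> F"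
  using add_mem uminus_mem by (metis diff_conv_add_uminus)

lemma divide_mem: "x \<in> F \<Longrightarrow> y \<in> F \<Longrightarrow> x / y \<in> F"
  using mult_mem inverse_mem by (metis divide_inverse)

lemma two_le_card: "2 \<le> card F"
  using card_mono[OF finite_F, of "{0, 1}"] zero_mem one_mem by simp

definition family_span :: "'b set \<Rightarrow> ('b \<Rightarrow> 'a) \<Rightarrow> 'a set" where
  "family_span I x = {(\<Sum>j\<in>I. c j * x j) | c. \<forall>j\<in>I. c j \<in> F}"

definition family_indep :: "'b set \<Rightarrow> ('b \<Rightarrow> 'a) \<Rightarrow> bool" where
  "family_indep I x \<longleftrightarrow>
     (\<forall>c. (\<forall>j\<in>I. c j \<in> F) \<longrightarrow> (\<Sum>j\<in>I. c j * x j) = 0 \<longrightarrow> (\<forall>j\<in>I. c j = 0))"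

lemma family_spanI: "(\<And>j. j \<in> I \<Longrightarrow> c j \<in> F) \<Longrightarrow> (\<Sum>j\<in>I. c j * x j) \<in> family_span I x"
  unfolding family_span_def by blast

lemma family_indepD:
  "family_indep I x \<Longrightarrow> (\<And>j. j \<in> I \<Longrightarrow> c j \<in> F) \<Longrightarrow> (\<Sum>j\<in>I. c j * x j) = 0 \<Longrightarrow> j \<in> I
    \<Longrightarrow> c j = 0"
  unfolding family_indep_def by blast

lemma family_span_zero: "0 \<in> family_span I x"
  unfolding family_span_def by (auto intro!: exI[of _ "\<lambda>_. 0"] simp: zero_mem)

lemma family_span_add:
  assumes "a \<in> family_span I x" "b \<in> family_span I x"
  shows "a + b \<in> family_span I x"
proof -
  obtain c c' where "a = (\<Sum>j\<in>I. c j * x j)" "\<forall>j\<in>I. c j \<in> F"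
    and "b = (\<Sum>j\<in>I. c' j * x j)" "\<forall>j\<in>I. c' j \<in> F"
    using assms unfolding family_span_def by auto
  moreover from this have "a + b = (\<Sum>j\<in>I. (c j + c' j) * x j)"
    by (simp add: sum.distrib distrib_right)
  ultimately show ?thesis
    unfolding family_span_def by (auto intro!: exI[of _ "\<lambda>j. c j + c' j"] add_mem)
qed

lemma family_span_scale:
  assumes "a \<in> F" "b \<in> family_span I x"
  shows "a * b \<in> family_span I x"
proof -
  obtain c where "b = (\<Sum>j\<in>I. c j * x j)" "\<forall>j\<in>I. c j \<in> F"
    using assms(2) unfolding family_span_def by auto
  moreover from this have "a * b = (\<Sum>j\<in>I. (a * c j) * x j)"
    by (simp add: sum_distrib_left mult.assoc)
  ultimately show ?thesis
    unfolding family_span_def using assms(1) by (auto intro!: exI[of _ "\<lambda>j. a * c j"] mult_mem)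
qed

lemma family_span_sum:
  "finite T \<Longrightarrow> (\<And>t. t \<in> T \<Longrightarrow> f t \<in> family_span I x) \<Longrightarrow> sum f T \<in> family_span I x"
  by (induction T rule: finite_induct) (auto simp: family_span_zero family_span_add)

lemma family_span_eq_image:
  "family_span I x = (\<lambda>c. \<Sum>j\<in>I. c j * x j) ` (I \<rightarrow>\<^sub>E F)"
proof (intro equalityI subsetI)
  fix a assume "a \<in> family_span I x"
  then obtain c where "a = (\<Sum>j\<in>I. c j * x j)" "\<forall>j\<in>I. c j \<in> F"
    unfolding family_span_def by auto
  then show "a \<in> (\<lambda>c. \<Sum>j\<in>I. c j * x j) ` (I \<rightarrow>\<^sub>E F)"
    by (intro image_eqI[of _ _ "restrict c I"]) auto
qed (auto simp: family_span_def PiE_iff)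

lemma finite_family_span: "finite I \<Longrightarrow> finite (family_span I x)"
  unfolding family_span_eq_image using finite_F by (intro finite_imageI finite_PiE)

lemma card_family_span_le: "finite I \<Longrightarrow> card (family_span I x) \<le> card F ^ card I"
  unfolding family_span_eq_image using card_image_le[of "I \<rightarrow>\<^sub>E F"] finite_F
  by (simp add: card_PiE finite_PiE)

lemma card_family_span_indep:
  assumes I: "finite I" and indep: "family_indep I x"
  shows "card (family_span I x) = card F ^ card I"
proof -
  have "inj_on (\<lambda>c. \<Sum>j\<in>I. c j * x j) (I \<rightarrow>\<^sub>E F)"
  proof (rule inj_onI)
    fix c c' assume c: "c \<in> I \<rightarrow>\<^sub>E F" and c': "c' \<in> I \<rightarrow>\<^sub>E F"
      and "(\<Sum>j\<in>I. c j * x j) = (\<Sum>j\<in>I. c' j * x j)"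
    then have "(\<Sum>j\<in>I. (c j - c' j) * x j) = 0"
      by (simp add: left_diff_distrib sum_subtractf)
    moreover have "\<forall>j\<in>I. c j - c' j \<in> F" using c c' diff_mem by auto
    ultimately have "c j = c' j" if "j \<in> I" for j
      using family_indepD[OF indep, of "\<lambda>j. c j - c' j" j] that by simp
    then show "c = c'" by (intro PiE_ext[OF c c'])
  qed
  then show ?thesis
    unfolding family_span_eq_image using I by (simp add: card_image card_PiE)
qed

lemma family_span_subset:
  assumes "finite J" "y ` J \<subseteq> family_span I x"
  shows "family_span J y \<subseteq> family_span I x"
proof
  fix a assume "a \<in> family_span J y"
  then obtain c where "a = (\<Sum>j\<in>J. c j * y j)" "\<forall>j\<in>J. c j \<in> F"
    unfolding family_span_def by auto
  with assms show "a \<in> family_span I x"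
    by (auto intro!: family_span_sum family_span_scale)
qed

text \<open>Counting: the span of an independent family J has |F|^|J| elements.\<close>
lemma card_le_if_family_indep_in_span:
  assumes "finite I" "finite J" "family_indep J y" "y ` J \<subseteq> family_span I x"
  shows "card J \<le> card I"
proof -
  have "card F ^ card J = card (family_span J y)"
    using card_family_span_indep[OF assms(2,3)] by simp
  also have "\<dots> \<le> card (family_span I x)"
    using family_span_subset[OF assms(2,4)] finite_family_span[OF assms(1)] by (rule card_mono[rotated])
  also have "\<dots> \<le> card F ^ card I" using card_family_span_le[OF assms(1)] .
  finally show ?thesis
    by (rule power_le_imp_le_exp[rotated]) (use two_le_card in linarith)
qed

lemma sum_insert_fun_upd:
  assumes "finite I" "j \<notin> I"
  shows "(\<Sum>i\<in>insert j I. c i * (x(j := y)) i) = c j * y + (\<Sum>i\<in>I. c i * x i)"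
proof -
  have "(\<Sum>i\<in>I. c i * (x(j := y)) i) = (\<Sum>i\<in>I. c i * x i)"
    using assms(2) by (intro sum.cong) auto
  with assms show ?thesis by simp
qed

lemma family_indep_insert:
  assumes I: "finite I" "j \<notin> I" and indep: "family_indep I x" and y: "y \<notin> family_span I x"
  shows "family_indep (insert j I) (x(j := y))"
  unfolding family_indep_def
proof (intro allI impI ballI)
  fix c k assume c: "\<forall>i\<in>insert j I. c i \<in> F" and k: "k \<in> insert j I"
    and "(\<Sum>i\<in>insert j I. c i * (x(j := y)) i) = 0"
  then have sum0: "c j * y + (\<Sum>i\<in>I. c i * x i) = 0"
    using sum_insert_fun_upd[OF I, of c x y] by simp
  have cj: "c j = 0"
  proof (rule ccontr)
    assume "c j \<noteq> 0"
    with sum0 have "y = (\<Sum>i\<in>I. (- c i / c j) * x i)"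
      by (simp add: sum_divide_distrib[symmetric] sum_negf field_simps eq_neg_iff_add_eq_0)
    moreover have "(\<Sum>i\<in>I. (- c i / c j) * x i) \<in> family_span I x"
      using c divide_mem uminus_mem by (intro family_spanI) auto
    ultimately have "y \<in> family_span I x" by simp
    with y show False by simp
  qed
  with sum0 c k show "c k = 0" using family_indepD[OF indep, of c k] by auto
qed

lemma inj_on_if_family_indep:
  assumes I: "finite I" and indep: "family_indep I x"
  shows "inj_on x I"
proof (rule inj_onI, rule ccontr)
  fix i j assume ij: "i \<in> I" "j \<in> I" "x i = x j" "i \<noteq> j"
  define c :: "'b \<Rightarrow> 'a" where "c k = (if k = i then 1 else if k = j then -1 else 0)" for k
  have "(\<Sum>k\<in>I. c k * x k) = (\<Sum>k\<in>I. (if k = i then x k else 0) - (if k = j then x k else 0))"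
    using ij by (intro sum.cong) (auto simp: c_def)
  also have "\<dots> = 0" using ij I by (simp add: sum_subtractf)
  moreover have "c k \<in> F" for k
    unfolding c_def using zero_mem one_mem uminus_mem[OF one_mem] by auto
  ultimately have "c i = 0" using family_indepD[OF indep, of c i] ij by auto
  then show False by (simp add: c_def)
qed

lemma ex_family_indep:
  assumes "finite (UNIV :: 'a set)" "finite I" "card F ^ card I \<le> CARD('a)"
  shows "\<exists>x. family_indep I x"
  using assms(2,3)
proof (induction I rule: finite_induct)
  case empty
  then show ?case by (simp add: family_indep_def)
next
  case (insert j I)
  have less: "card F ^ card I < card F ^ card (insert j I)"
    using insert two_le_card by (intro power_strict_increasing) auto
  with insert.prems have "card F ^ card I \<le> CARD('a)" by linarith
  with insert.IH obtain x where x: "family_indep I x" by blast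
  have "card (family_span I x) < CARD('a)"
    using card_family_span_le[OF insert(1), of x] less insert(4) by linarith
  then obtain y where "y \<notin> family_span I x" by (metis UNIV_I less_irrefl subsetI subset_antisym)
  with insert x show ?case by (blast intro: family_indep_insert)
qed

lemma card_Un_UN_images_le:
  assumes "finite U"
  shows "card (U \<union> (\<Union>a\<in>F. g a ` U)) \<le> (1 + card F) * card U"
proof -
  have "card (U \<union> (\<Union>a\<in>F. g a ` U)) \<le> card U + card (\<Union>a\<in>F. g a ` U)"
    by (rule card_Un_le)
  also have "\<dots> \<le> card U + (\<Sum>a\<in>F. card (g a ` U))"
    using card_UN_le[OF finite_F] by (rule add_left_mono)
  also have "\<dots> \<le> card U + (\<Sum>a\<in>F. card U)"
    by (intro add_left_mono sum_mono card_image_le assms)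
  finally show ?thesis by simp
qed

lemma ex_generic_element:
  assumes "finite U" "c \<notin> F" "(1 + card F) * card U < CARD('a)"
  shows "\<exists>y. y \<notin> U \<and> (\<forall>a\<in>F. \<forall>u\<in>U. c * y + w \<noteq> a * y + u)"
proof -
  define bad where "bad = U \<union> (\<Union>a\<in>F. (\<lambda>u. (u - w) / (c - a)) ` U)"
  have "card bad < CARD('a)"
    using card_Un_UN_images_le[OF assms(1)] assms(3) unfolding bad_def by (meson le_less_trans)
  then obtain y where y: "y \<notin> bad" by (metis UNIV_I less_irrefl subsetI subset_antisym)
  have "c * y + w \<noteq> a * y + u" if "a \<in> F" "u \<in> U" for a u
  proof
    assume "c * y + w = a * y + u"
    then have "(c - a) * y = u - w" by (simp add: algebra_simps)
    moreover have "c - a \<noteq> 0" using that assms(2) by auto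
    ultimately have "y = (u - w) / (c - a)" by (simp add: field_simps)
    with that y show False unfolding bad_def by blast
  qed
  with y show ?thesis unfolding bad_def by blast
qed

lemma ex_family_indep_comb_notin_span:
  assumes fin: "finite (UNIV :: 'a set)" and I: "finite I" "i0 \<in> I" and c: "\<beta> i0 \<notin> F"
    and card: "card F ^ Suc (card I) \<le> CARD('a)"
  shows "\<exists>x. family_indep I x \<and> (\<Sum>i\<in>I. \<beta> i * x i) \<notin> family_span I x"
proof -
  define I' where "I' = I - {i0}"
  have I': "finite I'" "i0 \<notin> I'" "I = insert i0 I'"
    using I by (auto simp: I'_def)
  have card_I': "Suc (card I') = card I"
    unfolding I'_def using card_Suc_Diff1[OF I] .
  let ?f = "card F"
  have "?f ^ card I' \<le> ?f ^ Suc (card I)"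
    using two_le_card card_I' by (intro power_increasing) auto
  then obtain x0 where x0: "family_indep I' x0"
    using ex_family_indep[OF fin I'(1)] card by fastforce
  define U where "U = family_span I' x0"
  have grow: "1 + ?f < ?f * ?f" using two_le_card mult_le_mono1[of 2 ?f ?f] by linarith
  have "(1 + ?f) * card U \<le> (1 + ?f) * ?f ^ card I'"
    unfolding U_def by (intro mult_left_mono card_family_span_le[OF I'(1)]) simp
  also have "\<dots> < ?f * ?f * ?f ^ card I'"
    using grow two_le_card by (intro mult_strict_right_mono) auto
  also have "\<dots> = ?f ^ Suc (card I)" by (simp flip: card_I')
  also have "\<dots> \<le> CARD('a)" by (rule card)
  finally obtain y where y: "y \<notin> U"
    and generic: "\<forall>a\<in>F. \<forall>u\<in>U. \<beta> i0 * y + (\<Sum>i\<in>I'. \<beta> i * x0 i) \<noteq> a * y + u"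
    using ex_generic_element[OF finite_family_span[OF I'(1)] c] unfolding U_def by blast
  define x where "x = x0(i0 := y)"
  have split: "(\<Sum>i\<in>I. g i * x i) = g i0 * y + (\<Sum>i\<in>I'. g i * x0 i)" for g
    unfolding x_def I'(3) by (rule sum_insert_fun_upd[OF I'(1,2)])
  have "(\<Sum>i\<in>I. \<beta> i * x i) \<notin> family_span I x"
  proof
    assume "(\<Sum>i\<in>I. \<beta> i * x i) \<in> family_span I x"
    then obtain a where eq: "(\<Sum>i\<in>I. \<beta> i * x i) = (\<Sum>i\<in>I. a i * x i)"
      and a: "\<forall>i\<in>I. a i \<in> F"
      unfolding family_span_def by blast
    have "(\<Sum>i\<in>I'. a i * x0 i) \<in> U"
      unfolding U_def using a I'(3) by (intro family_spanI) auto
    moreover have "\<beta> i0 * y + (\<Sum>i\<in>I'. \<beta> i * x0 i) = a i0 * y + (\<Sum>i\<in>I'. a i * x0 i)"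
      using eq by (simp only: split)
    ultimately show False using generic a I(2) by blast
  qed
  moreover have "family_indep I x"
    unfolding x_def I'(3) using family_indep_insert[OF I'(1,2) x0] y U_def by simp
  ultimately show ?thesis by blast
qed

end

section \<open>The fixed field of the q-Frobenius\<close>

lemma prime_power_ge_2:
  assumes "prime_power q"
  shows "2 \<le> q"
proof -
  obtain p e where p: "prime p" "0 < e" "q = p ^ e" using assms unfolding prime_power_def by blast
  then have "p \<le> q" using prime_gt_0_nat[OF p(1)] by (simp add: self_le_power)
  with prime_ge_2_nat[OF p(1)] show ?thesis by linarith
qed

lemma frobenius_add:
  fixes x y :: "'a::{finite,field}"
  assumes "prime_power q" and "CARD('a) = q ^ m"
  shows "(x + y) ^ q = x ^ q + y ^ q"
proof -
  obtain p e where p: "prime p" "q = p ^ e" using assms(1) unfolding prime_power_def by blast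
  have char: "prime CHAR('a)" by (intro prime_CHAR_semidom finite_imp_CHAR_pos) simp
  have "CHAR('a) dvd p ^ (e * m)" using CHAR_dvd_CARD[where 'a='a] assms(2) p(2)
    by (simp add: power_mult)
  then have "CHAR('a) = p" using char p(1) prime_dvd_power primes_dvd_imp_eq by blast
  with char p(2) show ?thesis by (intro freshmans_dream') auto
qed

lemma card_Fq_le:
  assumes "2 \<le> q"
  shows "card (Fq q :: 'a::field set) \<le> q"
proof -
  define P :: "'a poly" where "P = Polynomial.monom 1 q - [:0, 1:]"
  have "Polynomial.coeff P q = 1" using assms by (auto simp: P_def coeff_pCons split: nat.splits)
  then have "P \<noteq> 0" by auto
  moreover have "degree P \<le> q"
    unfolding P_def using assms by (intro degree_diff_le) (auto intro: degree_monom_le)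
  moreover have "Fq q = {x. poly P x = 0}" by (auto simp: Fq_def P_def poly_monom)
  ultimately show ?thesis using card_poly_roots_bound[of P] by simp
qed

lemma finite_subfield_Fq:
  assumes q: "1 \<le> q" and add: "\<And>x y::'a::{finite,field}. (x + y) ^ q = x ^ q + y ^ q"
  shows "finite_subfield (Fq q :: 'a set)"
proof
  fix x y :: 'a
  show "x \<in> Fq q \<Longrightarrow> y \<in> Fq q \<Longrightarrow> x + y \<in> Fq q" using add by (simp add: Fq_def)
  show "x \<in> Fq q \<Longrightarrow> y \<in> Fq q \<Longrightarrow> x * y \<in> Fq q" by (simp add: Fq_def power_mult_distrib)
  show "x \<in> Fq q \<Longrightarrow> inverse x \<in> Fq q" by (simp add: Fq_def power_inverse)
  assume "x \<in> Fq q"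
  with add[of x "- x"] q have "x + (- x) ^ q = 0" by (simp add: Fq_def power_0_left)
  then show "- x \<in> Fq q" by (simp add: Fq_def minus_unique[symmetric])
qed (use q in \<open>auto simp: Fq_def\<close>)

lemma power_sum_additive:
  fixes f :: "'b \<Rightarrow> 'a::comm_semiring_1"
  assumes "\<And>x y::'a. (x + y) ^ q = x ^ q + y ^ q" and "(0::'a) ^ q = 0"
  shows "(\<Sum>i\<in>A. f i) ^ q = (\<Sum>i\<in>A. f i ^ q)"
  using assms by (induction A rule: infinite_finite_induct) auto

section \<open>F_q-dimension and rank\<close>

lemma subset_Fq_span: "S \<subseteq> Fq_span q S"
proof
  fix b assume "b \<in> S"
  moreover have "b = (\<Sum>t\<in>{b}. 1 * t)" by simp
  ultimately show "b \<in> Fq_span q S"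
    unfolding Fq_span_def by (intro CollectI exI[of _ "{b}"] exI[of _ "\<lambda>_. 1"]) (auto simp: Fq_def)
qed

lemma finite_Fq_indep_cards:
  "finite {card B | B. finite B \<and> B \<subseteq> W \<and> Fq_indep q (B :: 'a::{finite,field} set)}"
  by (rule finite_subset[of _ "{..CARD('a)}"]) (auto intro: card_mono)

lemma Fq_dim_le:
  fixes W :: "'a::{finite,field} set"
  assumes "\<And>B. finite B \<Longrightarrow> B \<subseteq> W \<Longrightarrow> Fq_indep q B \<Longrightarrow> card B \<le> n"
  shows "Fq_dim q W \<le> n"
  unfolding Fq_dim_def using assms finite_Fq_indep_cards
  by (subst Max_le_iff) (auto simp: Fq_indep_def intro!: exI[of _ "{}"])

lemma card_le_Fq_dim:
  fixes W :: "'a::{finite,field} set"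
  assumes "finite B" "B \<subseteq> W" "Fq_indep q B"
  shows "card B \<le> Fq_dim q W"
  unfolding Fq_dim_def using assms finite_Fq_indep_cards by (intro Max_ge) auto

locale Fq_subfield = finite_subfield "Fq q :: 'a::{finite,field} set" for q :: nat
begin

lemma Fq_span_subset_family_span:
  assumes "S \<subseteq> family_span I x"
  shows "Fq_span q S \<subseteq> family_span I x"
  using assms unfolding Fq_span_def by (auto intro!: family_span_sum family_span_scale)

lemma family_indep_if_Fq_indep: "finite B \<Longrightarrow> Fq_indep q B \<Longrightarrow> family_indep B id"
  unfolding Fq_indep_def family_indep_def by auto

lemma Fq_indep_image:
  assumes I: "finite I" and indep: "family_indep I x"
  shows "Fq_indep q (x ` I)"
  unfolding Fq_indep_def
proof (intro allI impI ballI)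
  fix T c b assume T: "finite T" "T \<subseteq> x ` I" and c: "\<forall>b\<in>T. c b \<in> Fq q"
    and sum0: "(\<Sum>b\<in>T. c b * b) = 0" and b: "b \<in> T"
  define c' where "c' k = (if x k \<in> T then c (x k) else 0)" for k
  have inj: "inj_on x {k\<in>I. x k \<in> T}"
    using inj_on_if_family_indep[OF I indep] by (rule inj_on_subset) auto
  have "(\<Sum>k\<in>I. c' k * x k) = (\<Sum>k\<in>I. if x k \<in> T then c (x k) * x k else 0)"
    by (rule sum.cong) (auto simp: c'_def)
  also have "\<dots> = (\<Sum>k\<in>{k\<in>I. x k \<in> T}. c (x k) * x k)"
    by (rule sum.inter_filter[OF I, symmetric])
  also have "\<dots> = (\<Sum>b\<in>x ` {k\<in>I. x k \<in> T}. c b * b)" by (simp add: sum.reindex[OF inj])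
  also have "x ` {k\<in>I. x k \<in> T} = T" using T(2) by auto
  finally have c'0: "c' k = 0" if "k \<in> I" for k
    using family_indepD[OF indep, of c' k] that c sum0 by (auto simp: c'_def zero_mem)
  obtain k where k: "k \<in> I" "b = x k" using b T(2) by blast
  show "c b = 0" using c'0[OF k(1)] k(2) b by (simp add: c'_def)
qed

lemma rk_le_card:
  assumes "finite I" "range (\<lambda>j. v $ j) \<subseteq> family_span I x"
  shows "rk q v \<le> card I"
  unfolding rk_def
proof (rule Fq_dim_le)
  fix B assume "finite B" "B \<subseteq> Fq_span q (range (\<lambda>j. v $ j))" "Fq_indep q B"
  with Fq_span_subset_family_span[OF assms(2)] show "card B \<le> card I"
    by (intro card_le_if_family_indep_in_span[OF assms(1), of B id] family_indep_if_Fq_indep) auto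
qed

lemma card_le_rk:
  assumes "finite I" "family_indep I x" "x ` I \<subseteq> range (\<lambda>j. v $ j)"
  shows "card I \<le> rk q v"
proof -
  have "x ` I \<subseteq> Fq_span q (range (\<lambda>j. v $ j))" using assms(3) subset_Fq_span by blast
  then have "card (x ` I) \<le> rk q v"
    unfolding rk_def using assms(1,2) by (intro card_le_Fq_dim Fq_indep_image) auto
  then show ?thesis using card_image[OF inj_on_if_family_indep[OF assms(1,2)]] by simp
qed

end

lemma rk_le_maxrk: "finite V \<Longrightarrow> v \<in> V \<Longrightarrow> rk q v \<le> maxrk q V"
  unfolding maxrk_def by (intro Max_ge) auto

lemma maxrk_le_iff: "finite V \<Longrightarrow> V \<noteq> {} \<Longrightarrow> maxrk q V \<le> d \<longleftrightarrow> (\<forall>v\<in>V. rk q v \<le> d)"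
  unfolding maxrk_def by (subst Max_le_iff) auto

section \<open>Reduced row echelon bases\<close>

locale pivot_basis =
  fixes V :: "('a::field ^ 'n) set" and P :: "'n set" and b :: "'n \<Rightarrow> 'a ^ 'n"
  assumes subspace: "vec.subspace V"
    and basis_mem: "i \<in> P \<Longrightarrow> b i \<in> V"
    and basis_nth: "i \<in> P \<Longrightarrow> j \<in> P \<Longrightarrow> b i $ j = (if i = j then 1 else 0)"
    and expansion: "v \<in> V \<Longrightarrow> v = (\<Sum>i\<in>P. (v $ i) *s b i)"
begin

definition comb :: "('n \<Rightarrow> 'a) \<Rightarrow> 'a ^ 'n" where
  "comb x = (\<Sum>i\<in>P. x i *s b i)"

lemma comb_mem: "comb x \<in> V"
  unfolding comb_def using subspace basis_mem
  by (intro vec.subspace_sum vec.subspace_scale) auto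

lemma comb_nth: "comb x $ j = (\<Sum>i\<in>P. x i * b i $ j)"
  by (simp add: comb_def)

lemma comb_nth_pivot:
  assumes "j \<in> P"
  shows "comb x $ j = x j"
proof -
  have "comb x $ j = (\<Sum>i\<in>P. if i = j then x i else 0)"
    unfolding comb_nth using basis_nth assms by (intro sum.cong) auto
  with assms show ?thesis by simp
qed

lemma pivot_values_subset_range: "x ` P \<subseteq> range (\<lambda>j. comb x $ j)"
proof
  fix y assume "y \<in> x ` P"
  then obtain i where "i \<in> P" "y = x i" by blast
  then have "y = comb x $ i" by (simp add: comb_nth_pivot)
  then show "y \<in> range (\<lambda>j. comb x $ j)" by (rule ssubst) (rule rangeI)
qed

lemma nth_eq_sum_pivots:
  assumes "v \<in> V"
  shows "v $ j = (\<Sum>i\<in>P. v $ i * b i $ j)"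
  using arg_cong[OF expansion[OF assms], of "\<lambda>w. w $ j"] by simp

lemma eq_0_if_pivots_0:
  assumes "u \<in> V" "\<And>k. k \<in> P \<Longrightarrow> u $ k = 0"
  shows "u = 0"
proof -
  have "u = (\<Sum>i\<in>P. (u $ i) *s b i)" using expansion[OF assms(1)] .
  also have "\<dots> = 0" using assms(2) by simp
  finally show ?thesis .
qed

lemma dim_eq_card: "vec.dim V = card P"
proof -
  have inj: "inj_on b P"
  proof (rule inj_onI)
    fix i j assume ij: "i \<in> P" "j \<in> P" "b i = b j"
    then have "b j $ i = 1" using basis_nth[of i i] by simp
    with basis_nth[of j i] ij show "i = j" by (auto split: if_splits)
  qed
  have "vec.independent (b ` P)"
  proof (rule vec.independent_if_scalars_zero)
    fix f x assume sum0: "(\<Sum>x\<in>b ` P. f x *s x) = 0" and "x \<in> b ` P"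
    then obtain i where i: "i \<in> P" "x = b i" by auto
    have "comb (f \<circ> b) = 0" using sum0 by (simp add: comb_def sum.reindex[OF inj])
    then show "f x = 0" using comb_nth_pivot[OF i(1), of "f \<circ> b"] i by simp
  qed simp
  moreover have "V \<subseteq> vec.span (b ` P)"
  proof
    fix v assume "v \<in> V"
    have "(\<Sum>i\<in>P. (v $ i) *s b i) \<in> vec.span (b ` P)"
      by (intro vec.span_sum vec.span_scale vec.span_base) auto
    with expansion[OF \<open>v \<in> V\<close>] show "v \<in> vec.span (b ` P)" by simp
  qed
  ultimately have "vec.dim V = card (b ` P)"
    using basis_mem by (intro vec.dim_unique) auto
  then show ?thesis using card_image[OF inj] by simp
qed

end

lemma ex_pivot_set:
  fixes V :: "('a::field ^ 'n) set"
  shows "\<exists>P. (\<forall>v\<in>V. (\<forall>i\<in>P. v $ i = 0) \<longrightarrow> v = 0) \<and>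
             (\<forall>i\<in>P. \<exists>v\<in>V. (\<forall>j\<in>P - {i}. v $ j = 0) \<and> v $ i \<noteq> 0)"
proof -
  define Z where "Z P \<longleftrightarrow> (\<forall>v\<in>V. (\<forall>i\<in>P. v $ i = 0) \<longrightarrow> v = 0)" for P :: "'n set"
  have "Z UNIV" by (auto simp: Z_def vec_eq_iff)
  then obtain P where P: "Z P" and min: "\<And>P'. Z P' \<Longrightarrow> card P \<le> card P'"
    using ex_has_least_nat[of Z UNIV card] by blast
  have witness: "\<exists>v\<in>V. (\<forall>j\<in>P - {i}. v $ j = 0) \<and> v $ i \<noteq> 0" if i: "i \<in> P" for i
  proof -
    have "card (P - {i}) < card P" using i by (intro card_Diff1_less) auto
    then have "\<not> Z (P - {i})" using min by force
    then obtain v where v: "v \<in> V" "\<forall>j\<in>P - {i}. v $ j = 0" "v \<noteq> 0" unfolding Z_def by blast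
    have "v $ i \<noteq> 0"
    proof
      assume "v $ i = 0"
      with v(2) have "\<forall>j\<in>P. v $ j = 0" by auto
      with P v(1,3) show False unfolding Z_def by blast
    qed
    with v show ?thesis by blast
  qed
  show ?thesis
    by (rule exI[of _ P]) (use P witness in \<open>simp add: Z_def\<close>)
qed

lemma ex_pivot_basis:
  fixes V :: "('a::field ^ 'n) set"
  assumes V: "vec.subspace V"
  shows "\<exists>P b. pivot_basis V P b"
proof -
  obtain P where P: "\<forall>v\<in>V. (\<forall>i\<in>P. v $ i = 0) \<longrightarrow> v = 0"
    and witness: "\<forall>i\<in>P. \<exists>v\<in>V. (\<forall>j\<in>P - {i}. v $ j = 0) \<and> v $ i \<noteq> 0"
    using ex_pivot_set[of V] by blast
  from bchoice[OF witness[unfolded Bex_def]] obtain w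
    where w: "\<forall>i\<in>P. w i \<in> V \<and> (\<forall>j\<in>P - {i}. w i $ j = 0) \<and> w i $ i \<noteq> 0"
    by blast
  define b where "b i = inverse (w i $ i) *s w i" for i
  have bV: "b i \<in> V" if "i \<in> P" for i using w that V by (simp add: b_def vec.subspace_scale)
  have bnth: "b i $ j = (if i = j then 1 else 0)" if "i \<in> P" "j \<in> P" for i j
    using w that by (auto simp: b_def)
  have expansion: "v = (\<Sum>i\<in>P. (v $ i) *s b i)" if v: "v \<in> V" for v
  proof -
    define u where "u = v - (\<Sum>i\<in>P. (v $ i) *s b i)"
    have "u \<in> V" unfolding u_def using v bV V
      by (intro vec.subspace_diff vec.subspace_sum vec.subspace_scale) auto
    moreover have "u $ j = 0" if j: "j \<in> P" for j
    proof -
      have "(\<Sum>i\<in>P. v $ i * b i $ j) = (\<Sum>i\<in>P. if i = j then v $ i else 0)"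
        using bnth j by (intro sum.cong) auto
      with j show ?thesis by (simp add: u_def)
    qed
    ultimately have "u = 0" using P by blast
    then show ?thesis by (simp add: u_def)
  qed
  have "pivot_basis V P b" using V bV bnth expansion by unfold_locales
  then show ?thesis by blast
qed

section \<open>Ranks of the vectors of a subspace\<close>

locale Fq_pivot_basis = Fq_subfield q + pivot_basis V P b
  for q and V :: "('a::{finite,field} ^ 'n) set" and P b +
  assumes card_Fq_power_le: "card (Fq q :: 'a set) ^ CARD('n) \<le> CARD('a)"
begin

lemma card_Fq_power_le_if: "k \<le> CARD('n) \<Longrightarrow> card (Fq q :: 'a set) ^ k \<le> CARD('a)"
  using power_increasing[of k "CARD('n)" "card (Fq q :: 'a set)"] two_le_card card_Fq_power_le
  by linarith

lemma card_le_maxrk: "card P \<le> maxrk q V"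
proof -
  have "card P \<le> CARD('n)" by (rule card_mono) auto
  then obtain x where x: "family_indep P x"
    using ex_family_indep[of P] card_Fq_power_le_if by auto
  have "card P \<le> rk q (comb x)" by (rule card_le_rk[OF _ x pivot_values_subset_range]) simp
  also have "\<dots> \<le> maxrk q V" using comb_mem by (intro rk_le_maxrk) auto
  finally show ?thesis .
qed

lemma basis_nth_in_Fq_if_frob_closed:
  assumes "frob_closed q V" "i \<in> P"
  shows "b i $ j \<in> Fq q"
proof -
  define u where "u = frob q (b i) - b i"
  have "u \<in> V" unfolding u_def using assms basis_mem subspace
    by (intro vec.subspace_diff) (auto simp: frob_closed_def)
  moreover have "u $ k = 0" if "k \<in> P" for k
    using basis_nth[OF assms(2) that] zero_mem by (simp add: u_def frob_def Fq_def)
  ultimately have "u = 0" by (rule eq_0_if_pivots_0)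
  then show ?thesis by (simp add: u_def frob_def Fq_def vec_eq_iff)
qed

lemma rk_le_if_basis_in_Fq:
  assumes "\<And>i j. i \<in> P \<Longrightarrow> b i $ j \<in> Fq q" "v \<in> V"
  shows "rk q v \<le> card P"
proof (rule rk_le_card)
  show "range (\<lambda>j. v $ j) \<subseteq> family_span P (\<lambda>i. v $ i)"
  proof
    fix a assume "a \<in> range (\<lambda>j. v $ j)"
    then obtain j where "a = v $ j" by blast
    also have "\<dots> = (\<Sum>i\<in>P. v $ i * b i $ j)" by (rule nth_eq_sum_pivots[OF assms(2)])
    also have "\<dots> = (\<Sum>i\<in>P. b i $ j * v $ i)" by (simp add: mult.commute)
    finally show "a \<in> family_span P (\<lambda>i. v $ i)" by (simp add: family_spanI assms(1))
  qed
qed simp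

lemma frob_closed_if_basis_in_Fq:
  assumes "\<And>i j. i \<in> P \<Longrightarrow> b i $ j \<in> Fq q"
    and add: "\<And>x y::'a. (x + y) ^ q = x ^ q + y ^ q"
  shows "frob_closed q V"
  unfolding frob_closed_def
proof
  fix v assume v: "v \<in> V"
  have zero: "(0::'a) ^ q = 0" using zero_mem by (simp add: Fq_def)
  have "frob q v $ j = comb (\<lambda>i. (v $ i) ^ q) $ j" for j
  proof -
    have "frob q v $ j = (\<Sum>i\<in>P. v $ i * b i $ j) ^ q"
      using nth_eq_sum_pivots[OF v, of j] by (simp add: frob_def)
    also have "\<dots> = (\<Sum>i\<in>P. (v $ i * b i $ j) ^ q)" by (rule power_sum_additive[OF add zero])
    also have "\<dots> = (\<Sum>i\<in>P. (v $ i) ^ q * b i $ j)"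
      using assms(1) by (intro sum.cong) (simp_all add: power_mult_distrib Fq_def)
    finally show ?thesis by (simp add: comb_nth)
  qed
  then have "frob q v = comb (\<lambda>i. (v $ i) ^ q)" by (simp add: vec_eq_iff)
  then show "frob q v \<in> V" using comb_mem by simp
qed

text \<open>If an entry b_i(j) lies outside F_q, a generic x makes the entry j of \<Sum> x_i b_i independent
  of its pivot entries x_i, so that vector has rank d + 1.\<close>
lemma basis_nth_in_Fq_if_rk_le:
  assumes j: "j \<notin> P" and i: "i \<in> P" and rk: "\<And>v. v \<in> V \<Longrightarrow> rk q v \<le> card P"
  shows "b i $ j \<in> Fq q"
proof (rule ccontr)
  assume notin_Fq: "b i $ j \<notin> Fq q"
  have "card P < CARD('n)" using j by (intro psubset_card_mono) auto
  then have card: "card (Fq q :: 'a set) ^ Suc (card P) \<le> CARD('a)"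
    by (intro card_Fq_power_le_if) simp
  obtain x where x: "family_indep P x" and "(\<Sum>k\<in>P. b k $ j * x k) \<notin> family_span P x"
    using ex_family_indep_comb_notin_span[of P i "\<lambda>k. b k $ j"] i card notin_Fq by auto
  moreover have "comb x $ j = (\<Sum>k\<in>P. b k $ j * x k)" by (simp add: comb_nth mult.commute)
  ultimately have notin: "comb x $ j \<notin> family_span P x" by simp
  have indep: "family_indep (insert j P) (x(j := comb x $ j))"
    using family_indep_insert[OF _ j x notin] by simp
  have entries: "(x(j := comb x $ j)) ` insert j P \<subseteq> range (\<lambda>k. comb x $ k)"
  proof
    fix y assume "y \<in> (x(j := comb x $ j)) ` insert j P"
    then obtain k where k: "k \<in> insert j P" "y = (x(j := comb x $ j)) k" by blast
    show "y \<in> range (\<lambda>k. comb x $ k)"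
    proof (cases "k = j")
      case False
      with k have "y \<in> x ` P" by auto
      with pivot_values_subset_range show ?thesis by blast
    qed (use k in auto)
  qed
  have "card (insert j P) \<le> rk q (comb x)" by (rule card_le_rk[OF _ indep entries]) simp
  with rk[OF comb_mem, of x] j show False by simp
qed

lemma basis_in_Fq_iff_rk_le:
  "(\<forall>i\<in>P. \<forall>j. b i $ j \<in> Fq q) \<longleftrightarrow> (\<forall>v\<in>V. rk q v \<le> card P)"
proof
  assume "\<forall>v\<in>V. rk q v \<le> card P"
  then show "\<forall>i\<in>P. \<forall>j. b i $ j \<in> Fq q"
    using basis_nth_in_Fq_if_rk_le basis_nth zero_mem one_mem by (metis (full_types))
qed (use rk_le_if_basis_in_Fq in blast)

lemma dim_eq_maxrk_iff_rk_le: "vec.dim V = maxrk q V \<longleftrightarrow> (\<forall>v\<in>V. rk q v \<le> card P)"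
proof -
  have "maxrk q V \<le> card P \<longleftrightarrow> (\<forall>v\<in>V. rk q v \<le> card P)"
    using vec.subspace_0[OF subspace] by (intro maxrk_le_iff) auto
  with card_le_maxrk show ?thesis by (auto simp: dim_eq_card)
qed

end

theorem theorem3p11:
  fixes q m :: nat
    and V :: "('a::{finite,field} ^ 'n) set"
  assumes "prime_power q"
    and "CARD('a) = q ^ m"
    and "1 \<le> CARD('n)" and "CARD('n) \<le> m"
    and "vec.subspace V"
  shows "frob_closed q V \<longleftrightarrow> vec.dim V = maxrk q V"
proof -
  have q: "2 \<le> q" using assms(1) by (rule prime_power_ge_2)
  have add: "(x + y) ^ q = x ^ q + y ^ q" for x y :: 'a using assms(1,2) by (rule frobenius_add)
  have "card (Fq q :: 'a set) ^ CARD('n) \<le> q ^ CARD('n)" using card_Fq_le[OF q] by (rule power_mono) simp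
  also have "\<dots> \<le> q ^ m" using q assms(4) by (intro power_increasing) auto
  finally have "card (Fq q :: 'a set) ^ CARD('n) \<le> CARD('a)" using assms(2) by simp
  moreover have "finite_subfield (Fq q :: 'a set)" by (rule finite_subfield_Fq) (use q add in auto)
  moreover obtain P b where "pivot_basis V P b" using ex_pivot_basis[OF assms(5)] by blast
  ultimately interpret Fq_pivot_basis q V P b
    by (simp add: Fq_pivot_basis_def Fq_pivot_basis_axioms_def Fq_subfield_def)
  have "frob_closed q V \<longleftrightarrow> (\<forall>i\<in>P. \<forall>j. b i $ j \<in> Fq q)"
    using basis_nth_in_Fq_if_frob_closed frob_closed_if_basis_in_Fq add by blast
  then show ?thesis by (simp add: basis_in_Fq_iff_rk_le dim_eq_maxrk_iff_rk_le)
qed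

end
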